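(* Let $G$ and $H$ be connected graphs, each with at least $3$ vertices, let $\ell_1=\lambda_3(G)$, $\ell_2=\lambda_3(H)$, $n_2=|V(H)|$. Let $S=\{x,y,z\}$ be a set of three distinct vertices of $G\circ H$ all lying in the same $H$-layer $H(u)$ for some $u\in V(G)$. Then $G\circ H$ contains at least $\ell_2+\ell_1 n_2$ pairwise edge-disjoint $S$-trees.
   Context: For a graph $G$ and $S\subseteq V(G)$ with $|S|\ge 2$, an $S$-tree is a subgraph that is a tree containing all vertices of $S$; $\lambda(S)$ is the maximum number of pairwise edge-disjoint $S$-trees, and $\lambda_3(G)=\min\{\lambda(S): |S|=3\}$. The lexicographic product $G\circ H$ has vertex set $V(G)\times V(H)$, and $(u,v)$ is adjacent to $(u',v')$ iff either $uu'\in E(G)$, or $u=u'$ and $vv'\in E(H)$. For $u\in V(G)$, the $H$-layer $H(u)$ is the vertex set $\{(u,v): v\in V(H)\}$. *)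

theory Defs
  imports Main
begin

type_synonym 'a sgraph = "'a set \<times> 'a set set"

definition verts :: "'a sgraph \<Rightarrow> 'a set" where "verts G = fst G"
definition edges :: "'a sgraph \<Rightarrow> 'a set set" where "edges G = snd G"

definition graph :: "'a sgraph \<Rightarrow> bool" where
  "graph G \<longleftrightarrow> finite (verts G) \<and>
     (\<forall>e\<in>edges G. \<exists>a b. a \<noteq> b \<and> e = {a, b} \<and> a \<in> verts G \<and> b \<in> verts G)"

definition connected :: "'a sgraph \<Rightarrow> bool" where
  "connected G \<longleftrightarrow> (\<forall>a\<in>verts G. \<forall>b\<in>verts G.
     (a, b) \<in> {(p, q). {p, q} \<in> edges G}\<^sup>*)"

definition has_cycle :: "'a sgraph \<Rightarrow> bool" where
  "has_cycle G \<longleftrightarrow> (\<exists>vs. length vs \<ge> 3 \<and> distinct vs \<and> set vs \<subseteq> verts G \<and>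
     (\<forall>i < length vs. {vs ! i, vs ! ((i + 1) mod length vs)} \<in> edges G))"

definition is_tree :: "'a sgraph \<Rightarrow> bool" where
  "is_tree T \<longleftrightarrow> graph T \<and> verts T \<noteq> {} \<and> connected T \<and> \<not> has_cycle T"

definition subgraph :: "'a sgraph \<Rightarrow> 'a sgraph \<Rightarrow> bool" where
  "subgraph T G \<longleftrightarrow> verts T \<subseteq> verts G \<and> edges T \<subseteq> edges G \<and>
     (\<forall>e\<in>edges T. e \<subseteq> verts T)"

definition S_tree :: "'a sgraph \<Rightarrow> 'a set \<Rightarrow> 'a sgraph \<Rightarrow> bool" where
  "S_tree G S T \<longleftrightarrow> subgraph T G \<and> is_tree T \<and> S \<subseteq> verts T"

definition has_k_disjoint_S_trees :: "'a sgraph \<Rightarrow> 'a set \<Rightarrow> nat \<Rightarrow> bool" where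
  "has_k_disjoint_S_trees G S k \<longleftrightarrow> (\<exists>T :: nat \<Rightarrow> 'a sgraph.
     (\<forall>i<k. S_tree G S (T i)) \<and>
     (\<forall>i<k. \<forall>j<k. i \<noteq> j \<longrightarrow> edges (T i) \<inter> edges (T j) = {}))"

definition lambda_S :: "'a sgraph \<Rightarrow> 'a set \<Rightarrow> nat" where
  "lambda_S G S = Max {k. has_k_disjoint_S_trees G S k}"

definition lambda3 :: "'a sgraph \<Rightarrow> nat" where
  "lambda3 G = Min {lambda_S G S | S. S \<subseteq> verts G \<and> card S = 3}"

definition lex_prod :: "'a sgraph \<Rightarrow> 'b sgraph \<Rightarrow> ('a \<times> 'b) sgraph" where
  "lex_prod G H = (verts G \<times> verts H,
     {{(u, v), (u', v')} | u v u' v'.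
        u \<in> verts G \<and> u' \<in> verts G \<and> v \<in> verts H \<and> v' \<in> verts H \<and>
        ({u, u'} \<in> edges G \<or> (u = u' \<and> {v, v'} \<in> edges H))})"

definition H_layer :: "'a sgraph \<Rightarrow> 'b sgraph \<Rightarrow> 'a \<Rightarrow> ('a \<times> 'b) set" where
  "H_layer G H u = {(u, v) | v. v \<in> verts H}"

end

theory Submission
  imports Defs
begin

text \<open>The \<open>\<lambda>\<^sub>3(H)\<close> edge-disjoint S-trees of \<open>H\<close> are copied into the layer \<open>H(u)\<close>. In addition,
  for every neighbour \<open>w\<close> of \<open>u\<close> in \<open>G\<close> and every \<open>v \<in> V(H)\<close>, the star with centre \<open>(w, v)\<close>
  and leaves \<open>x, y, z\<close> is an S-tree, because \<open>(w, v)\<close> is adjacent to all of \<open>H(u)\<close>. Stars with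
  different centres share no edge and no star edge lies inside a layer, so all these trees are
  edge-disjoint. Finally \<open>deg\<^sub>G(u) \<ge> \<lambda>\<^sub>3(G)\<close>: the edge-disjoint S'-trees for a 3-set \<open>S' \<ni> u\<close>
  each need their own edge at \<open>u\<close>.\<close>

lemma graph_edgeE:
  assumes "graph G" "e \<in> edges G"
  obtains a b where "a \<noteq> b" "e = {a, b}" "a \<in> verts G" "b \<in> verts G"
  using assms unfolding graph_def by blast

definition neighbours :: "'a sgraph \<Rightarrow> 'a \<Rightarrow> 'a set" where
  "neighbours G u = {w. {u, w} \<in> edges G}"

lemma neighboursD:
  assumes "graph G" "w \<in> neighbours G u"
  shows "w \<noteq> u" "u \<in> verts G" "w \<in> verts G"
proof -
  have "{u, w} \<in> edges G" using assms(2) by (simp add: neighbours_def)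
  with assms(1) obtain a b where "a \<noteq> b" "{u, w} = {a, b}" "a \<in> verts G" "b \<in> verts G"
    by (rule graph_edgeE)
  then show "w \<noteq> u" "u \<in> verts G" "w \<in> verts G" by (auto simp: doubleton_eq_iff)
qed

lemma finite_neighbours: "graph G \<Longrightarrow> finite (neighbours G u)"
  using neighboursD(3) unfolding graph_def by (metis finite_subset subsetI)

definition disjoint_S_tree_family :: "'a sgraph \<Rightarrow> 'a set \<Rightarrow> nat \<Rightarrow> (nat \<Rightarrow> 'a sgraph) \<Rightarrow> bool" where
  "disjoint_S_tree_family G S k T \<longleftrightarrow> (\<forall>i<k. S_tree G S (T i)) \<and>
     (\<forall>i<k. \<forall>j<k. i \<noteq> j \<longrightarrow> edges (T i) \<inter> edges (T j) = {})"

lemma has_k_disjoint_S_trees_iff_family: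
  "has_k_disjoint_S_trees G S k \<longleftrightarrow> (\<exists>T. disjoint_S_tree_family G S k T)"
  unfolding has_k_disjoint_S_trees_def disjoint_S_tree_family_def ..

lemma S_tree_edge_at:
  assumes "S_tree G S T" "s \<in> S" "s' \<in> S" "s \<noteq> s'"
  obtains w where "{s, w} \<in> edges T"
proof -
  have "connected T" "s \<in> verts T" "s' \<in> verts T"
    using assms unfolding S_tree_def is_tree_def by auto
  then have "(s, s') \<in> {(p, q). {p, q} \<in> edges T}\<^sup>*" unfolding connected_def by blast
  then show ?thesis using assms(4) that by (cases rule: converse_rtranclE) auto
qed

lemma disjoint_S_trees_le_degree:
  assumes "graph G" "has_k_disjoint_S_trees G S k" "s \<in> S" "s' \<in> S" "s \<noteq> s'"
  shows "k \<le> card (neighbours G s)"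
proof -
  obtain T where T: "\<forall>i<k. S_tree G S (T i)"
     "\<forall>i<k. \<forall>j<k. i \<noteq> j \<longrightarrow> edges (T i) \<inter> edges (T j) = {}"
    using assms(2) unfolding has_k_disjoint_S_trees_iff_family disjoint_S_tree_family_def by blast
  define nb where "nb i = (SOME w. {s, w} \<in> edges (T i))" for i
  have nb: "{s, nb i} \<in> edges (T i)" if "i < k" for i
  proof -
    have "\<exists>w. {s, w} \<in> edges (T i)"
      by (rule S_tree_edge_at[OF T(1)[rule_format, OF that] assms(3-5)]) blast
    then show ?thesis unfolding nb_def by (rule someI_ex)
  qed
  have "inj_on nb {..<k}"
  proof (rule inj_onI)
    fix i j assume "i \<in> {..<k}" "j \<in> {..<k}" "nb i = nb j"
    then have "{s, nb i} \<in> edges (T i) \<inter> edges (T j)" using nb[of i] nb[of j] by simp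
    then show "i = j" using T(2) \<open>i \<in> {..<k}\<close> \<open>j \<in> {..<k}\<close> by blast
  qed
  moreover have "nb ` {..<k} \<subseteq> neighbours G s"
    using nb T(1) unfolding S_tree_def subgraph_def neighbours_def by blast
  ultimately have "card {..<k} \<le> card (neighbours G s)"
    using finite_neighbours[OF assms(1)] by (rule card_inj_on_le)
  then show ?thesis by simp
qed

lemma disjoint_S_tree_family_mono:
  "disjoint_S_tree_family G S k T \<Longrightarrow> j \<le> k \<Longrightarrow> disjoint_S_tree_family G S j T"
  unfolding disjoint_S_tree_family_def by simp

lemma has_k_disjoint_S_trees_mono:
  "has_k_disjoint_S_trees G S k \<Longrightarrow> j \<le> k \<Longrightarrow> has_k_disjoint_S_trees G S j"
  unfolding has_k_disjoint_S_trees_iff_family by (blast intro: disjoint_S_tree_family_mono)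

lemma has_lambda_S_disjoint_S_trees:
  assumes "graph G" "s \<in> S" "s' \<in> S" "s \<noteq> s'"
  shows "has_k_disjoint_S_trees G S (lambda_S G S)"
proof -
  let ?K = "{k. has_k_disjoint_S_trees G S k}"
  have "?K \<subseteq> {..card (neighbours G s)}"
    using disjoint_S_trees_le_degree[OF assms(1) _ assms(2-4)] by auto
  moreover have "0 \<in> ?K" unfolding has_k_disjoint_S_trees_def by simp
  ultimately have "Max ?K \<in> ?K" by (intro Max_in) (auto intro: finite_subset)
  then show ?thesis unfolding lambda_S_def by simp
qed

lemma lambda_S_le_degree:
  assumes "graph G" "s \<in> S" "s' \<in> S" "s \<noteq> s'"
  shows "lambda_S G S \<le> card (neighbours G s)"
  using assms(1) has_lambda_S_disjoint_S_trees[OF assms] assms(2-4) by (rule disjoint_S_trees_le_degree)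

lemma lambda3_le_lambda_S:
  assumes "finite (verts G)" "S \<subseteq> verts G" "card S = 3"
  shows "lambda3 G \<le> lambda_S G S"
proof -
  have "{lambda_S G S | S. S \<subseteq> verts G \<and> card S = 3} \<subseteq> lambda_S G ` Pow (verts G)" by auto
  then have "finite {lambda_S G S | S. S \<subseteq> verts G \<and> card S = 3}"
    using assms(1) by (meson finite_Pow_iff finite_imageI finite_subset)
  then show ?thesis unfolding lambda3_def using assms by (intro Min_le) auto
qed

lemma has_lambda3_disjoint_S_trees:
  assumes "graph G" "S \<subseteq> verts G" "card S = 3"
  shows "has_k_disjoint_S_trees G S (lambda3 G)"
proof -
  obtain s s' s'' where "S = {s, s', s''}" "s \<noteq> s'"
    using assms(3) card_3_iff by metis
  then have "has_k_disjoint_S_trees G S (lambda_S G S)"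
    using has_lambda_S_disjoint_S_trees[OF assms(1)] by blast
  moreover have "lambda3 G \<le> lambda_S G S"
    using assms by (intro lambda3_le_lambda_S) (auto simp: graph_def)
  ultimately show ?thesis by (rule has_k_disjoint_S_trees_mono)
qed

lemma lambda3_le_degree:
  assumes "graph G" "card (verts G) \<ge> 3" "u \<in> verts G"
  shows "lambda3 G \<le> card (neighbours G u)"
proof -
  have fin: "finite (verts G)" using assms(1) by (simp add: graph_def)
  then have "card (verts G - {u}) \<ge> 2" using assms(2,3) by auto
  then obtain S' where "S' \<subseteq> verts G - {u}" "card S' = 2" by (meson obtain_subset_with_card_n)
  then obtain v w where vw: "v \<noteq> w" "{v, w} \<subseteq> verts G - {u}" by (metis card_2_iff)
  let ?S = "{u, v, w}"
  have "lambda3 G \<le> lambda_S G ?S"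
    using vw assms(3) by (intro lambda3_le_lambda_S[OF fin]) auto
  also have "\<dots> \<le> card (neighbours G u)"
    using vw by (intro lambda_S_le_degree[OF assms(1), of u ?S v]) auto
  finally show ?thesis .
qed

definition map_graph :: "('a \<Rightarrow> 'b) \<Rightarrow> 'a sgraph \<Rightarrow> 'b sgraph" where
  "map_graph f G = (f ` verts G, (`) f ` edges G)"

lemma has_cycle_map_graph_inj:
  assumes "inj f" "has_cycle (map_graph f T)"
  shows "has_cycle T"
proof -
  obtain vs where vs: "length vs \<ge> 3" "distinct vs" "set vs \<subseteq> f ` verts T"
    "\<forall>i < length vs. {vs ! i, vs ! ((i + 1) mod length vs)} \<in> (`) f ` edges T"
    using assms(2) unfolding has_cycle_def map_graph_def verts_def edges_def by auto
  let ?ws = "map (inv f) vs"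
  have "distinct ?ws"
    using vs(2,3) inj_on_inv_into[of "set vs" f UNIV] by (auto simp: distinct_map)
  moreover have "set ?ws \<subseteq> verts T" using vs(3) assms(1) by auto
  moreover have "{?ws ! i, ?ws ! ((i + 1) mod length ?ws)} \<in> edges T" if "i < length ?ws" for i
  proof -
    have "i < length vs" using that by simp
    then obtain e where "e \<in> edges T" "{vs ! i, vs ! ((i + 1) mod length vs)} = f ` e"
      using vs(4) by blast
    moreover have "(i + 1) mod length vs < length vs" using vs(1) by (intro mod_less_divisor) linarith
    ultimately have "inv f ` {vs ! i, vs ! ((i + 1) mod length vs)} \<in> edges T"
      using assms(1) by (simp only: image_inv_f_f)
    then show ?thesis using that \<open>(i + 1) mod length vs < length vs\<close> by simp
  qed
  ultimately show ?thesis using vs(1) unfolding has_cycle_def by (intro exI[of _ ?ws]) auto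
qed

lemma is_tree_map_graph:
  assumes "inj f" "is_tree T"
  shows "is_tree (map_graph f T)"
  unfolding is_tree_def
proof (intro conjI)
  have T: "graph T" "verts T \<noteq> {}" "connected T" "\<not> has_cycle T"
    using assms(2) unfolding is_tree_def by auto
  show "graph (map_graph f T)" unfolding graph_def
  proof (intro conjI ballI)
    show "finite (verts (map_graph f T))" using T(1) by (simp add: graph_def map_graph_def verts_def)
    fix e assume "e \<in> edges (map_graph f T)"
    then obtain e' where "e' \<in> edges T" "e = f ` e'" by (auto simp: map_graph_def edges_def)
    moreover from T(1) this(1) obtain a b where "a \<noteq> b" "e' = {a, b}" "a \<in> verts T" "b \<in> verts T"
      by (rule graph_edgeE)
    ultimately have "f a \<noteq> f b" "e = {f a, f b}" "f a \<in> verts (map_graph f T)" "f b \<in> verts (map_graph f T)"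
      using assms(1) by (simp_all add: inj_eq map_graph_def verts_def)
    then show "\<exists>a b. a \<noteq> b \<and> e = {a, b} \<and> a \<in> verts (map_graph f T) \<and> b \<in> verts (map_graph f T)"
      by blast
  qed
  show "verts (map_graph f T) \<noteq> {}" using T(2) by (simp add: map_graph_def verts_def)
  have "(f a, f b) \<in> {(p, q). {p, q} \<in> edges (map_graph f T)}\<^sup>*"
    if "(a, b) \<in> {(p, q). {p, q} \<in> edges T}\<^sup>*" for a b
    using that
  proof (induction rule: rtrancl_induct)
    case (step b c)
    then have "f ` {b, c} \<in> (`) f ` edges T" by (intro imageI) simp
    then have "{f b, f c} \<in> edges (map_graph f T)" by (simp add: map_graph_def edges_def)
    with step.IH show ?case by (simp add: rtrancl.rtrancl_into_rtrancl)
  qed simp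
  with T(3) show "connected (map_graph f T)"
    unfolding connected_def by (auto simp: map_graph_def verts_def)
  show "\<not> has_cycle (map_graph f T)" using T(4) has_cycle_map_graph_inj[OF assms(1)] by blast
qed

definition star :: "'a \<Rightarrow> 'a set \<Rightarrow> 'a sgraph" where
  "star c L = (insert c L, (\<lambda>l. {c, l}) ` L)"

lemma not_has_cycle_if_edges_share_vertex:
  assumes "\<And>e. e \<in> edges T \<Longrightarrow> c \<in> e"
  shows "\<not> has_cycle T"
proof
  assume "has_cycle T"
  then obtain vs where vs: "length vs \<ge> 3" "distinct vs"
    "\<forall>i < length vs. {vs ! i, vs ! ((i + 1) mod length vs)} \<in> edges T"
    unfolding has_cycle_def by blast
  let ?n = "length vs"
  have "vs \<noteq> []" "?n - 1 + 1 = ?n" using vs(1) by auto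
  moreover have "(1 + 1) mod ?n = 2" "(?n - 1 + 1) mod ?n = 0" using vs(1) calculation(2) by simp_all
  ultimately have "{vs ! 0, vs ! 1} \<in> edges T" "{vs ! 1, vs ! 2} \<in> edges T" "{vs ! (?n - 1), vs ! 0} \<in> edges T"
    using vs(1) vs(3)[rule_format, of 0] vs(3)[rule_format, of 1] vs(3)[rule_format, of "?n - 1"]
    by (simp_all add: numeral_2_eq_2)
  then have "c \<in> {vs ! 0, vs ! 1}" "c \<in> {vs ! 1, vs ! 2}" "c \<in> {vs ! (?n - 1), vs ! 0}"
    by (simp_all only: assms)
  moreover have "0 < ?n" "1 < ?n" "2 < ?n" "?n - 1 < ?n" "?n - 1 \<noteq> 1" using vs(1) by auto
  then have "vs ! 0 \<noteq> vs ! 2" "vs ! 1 \<noteq> vs ! 0" "vs ! 1 \<noteq> vs ! (?n - 1)"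
    using nth_eq_iff_index_eq[OF vs(2)] by simp_all
  ultimately show False by auto
qed

lemma is_tree_star:
  assumes "finite L" "c \<notin> L"
  shows "is_tree (star c L)"
  unfolding is_tree_def
proof (intro conjI)
  show "graph (star c L)" unfolding graph_def
  proof (intro conjI ballI)
    show "finite (verts (star c L))" using assms(1) by (simp add: star_def verts_def)
    fix e assume "e \<in> edges (star c L)"
    then obtain l where "l \<in> L" "e = {c, l}" by (auto simp: star_def edges_def)
    then show "\<exists>a b. a \<noteq> b \<and> e = {a, b} \<and> a \<in> verts (star c L) \<and> b \<in> verts (star c L)"
      using assms(2) by (intro exI[of _ c] exI[of _ l]) (auto simp: star_def verts_def)
  qed
  show "verts (star c L) \<noteq> {}" by (simp add: star_def verts_def)
  show "\<not> has_cycle (star c L)"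
    by (rule not_has_cycle_if_edges_share_vertex[of _ c]) (auto simp: star_def edges_def)
  let ?R = "{(p, q). {p, q} \<in> edges (star c L)}"
  have "(p, c) \<in> ?R" "(c, p) \<in> ?R" if "p \<in> L" for p
    using that by (auto simp: star_def edges_def insert_commute)
  then have "(p, c) \<in> ?R\<^sup>*" "(c, p) \<in> ?R\<^sup>*" if "p \<in> verts (star c L)" for p
    using that by (auto simp: star_def verts_def)
  then show "connected (star c L)" unfolding connected_def by (meson rtrancl_trans)
qed

lemma edges_star_disjoint:
  assumes "c \<notin> L" "c' \<notin> L" "c \<noteq> c'"
  shows "edges (star c L) \<inter> edges (star c' L) = {}"
  using assms by (auto simp: star_def edges_def doubleton_eq_iff)

lemma lex_prod_edge_in_layer:
  "u \<in> verts G \<Longrightarrow> {a, b} \<in> edges H \<Longrightarrow> a \<in> verts H \<Longrightarrow> b \<in> verts H \<Longrightarrow>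
    {(u, a), (u, b)} \<in> edges (lex_prod G H)"
  unfolding lex_prod_def edges_def verts_def by fastforce

lemma lex_prod_edge_across_layers:
  "{u, w} \<in> edges G \<Longrightarrow> u \<in> verts G \<Longrightarrow> w \<in> verts G \<Longrightarrow> a \<in> verts H \<Longrightarrow> b \<in> verts H \<Longrightarrow>
    {(u, a), (w, b)} \<in> edges (lex_prod G H)"
  unfolding lex_prod_def edges_def verts_def by fastforce

lemma S_tree_lex_prod_layer_copy:
  assumes "graph H" "u \<in> verts G" "S_tree H S T"
  shows "S_tree (lex_prod G H) (Pair u ` S) (map_graph (Pair u) T)"
proof -
  have T: "verts T \<subseteq> verts H" "edges T \<subseteq> edges H" "\<forall>e\<in>edges T. e \<subseteq> verts T"
    "is_tree T" "S \<subseteq> verts T"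
    using assms(3) unfolding S_tree_def subgraph_def by auto
  have "Pair u ` e \<in> edges (lex_prod G H)" if e: "e \<in> edges T" for e
  proof -
    have "e \<in> edges H" using T(2) e by blast
    with assms(1) obtain a b where "e = {a, b}" "a \<in> verts H" "b \<in> verts H"
      by (rule graph_edgeE)
    then show ?thesis using lex_prod_edge_in_layer[OF assms(2)] \<open>e \<in> edges H\<close> by simp
  qed
  then have "edges (map_graph (Pair u) T) \<subseteq> edges (lex_prod G H)"
    by (auto simp: map_graph_def edges_def)
  moreover have "verts (map_graph (Pair u) T) \<subseteq> verts (lex_prod G H)"
    using T(1) assms(2) by (auto simp: map_graph_def verts_def lex_prod_def)
  moreover have "\<forall>e\<in>edges (map_graph (Pair u) T). e \<subseteq> verts (map_graph (Pair u) T)"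
    using T(3) by (auto simp: map_graph_def verts_def edges_def)
  moreover have "Pair u ` S \<subseteq> verts (map_graph (Pair u) T)"
    using T(5) by (auto simp: map_graph_def verts_def)
  moreover have "is_tree (map_graph (Pair u) T)"
    using T(4) by (intro is_tree_map_graph) (simp_all add: inj_on_def)
  ultimately show ?thesis unfolding S_tree_def subgraph_def by blast
qed

lemma S_tree_lex_prod_star:
  assumes "graph G" "graph H" "w \<in> neighbours G u" "v \<in> verts H" "S \<subseteq> verts H"
  shows "S_tree (lex_prod G H) (Pair u ` S) (star (w, v) (Pair u ` S))"
proof -
  have uw: "w \<noteq> u" "u \<in> verts G" "w \<in> verts G" using neighboursD[OF assms(1,3)] by auto
  have "finite S" using assms(2,5) finite_subset unfolding graph_def by blast
  then have "is_tree (star (w, v) (Pair u ` S))" using uw(1) by (intro is_tree_star) auto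
  moreover have "{(u, s), (w, v)} \<in> edges (lex_prod G H)" if "s \<in> S" for s
    using assms(3-5) that uw by (intro lex_prod_edge_across_layers) (auto simp: neighbours_def)
  then have "edges (star (w, v) (Pair u ` S)) \<subseteq> edges (lex_prod G H)"
    by (auto simp: star_def edges_def insert_commute)
  moreover have "verts (star (w, v) (Pair u ` S)) \<subseteq> verts (lex_prod G H)"
    using uw assms(4,5) by (auto simp: star_def verts_def lex_prod_def)
  ultimately show ?thesis unfolding S_tree_def subgraph_def by (auto simp: star_def verts_def edges_def)
qed

lemma edges_map_graph_disjoint:
  assumes "inj f" "edges T \<inter> edges T' = {}"
  shows "edges (map_graph f T) \<inter> edges (map_graph f T') = {}"
proof -
  have "inj ((`) f)" using assms(1) by (simp add: inj_on_def inj_image_eq_iff)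
  then show ?thesis using assms(2) by (auto simp: map_graph_def edges_def inj_eq)
qed

lemma edges_layer_copy_star_disjoint:
  assumes "w \<noteq> u"
  shows "edges (map_graph (Pair u) T) \<inter> edges (star (w, v) L) = {}"
  using assms by (auto simp: map_graph_def star_def edges_def)

lemma disjoint_S_tree_family_append:
  assumes "disjoint_S_tree_family G S k T" "disjoint_S_tree_family G S m T'"
    and "\<And>i j. i < k \<Longrightarrow> j < m \<Longrightarrow> edges (T i) \<inter> edges (T' j) = {}"
  shows "disjoint_S_tree_family G S (k + m) (\<lambda>i. if i < k then T i else T' (i - k))"
  using assms unfolding disjoint_S_tree_family_def
  by (auto simp: Int_commute)

lemma disjoint_S_tree_family_layer_copies:
  assumes "graph H" "u \<in> verts G" "disjoint_S_tree_family H S k T"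
  shows "disjoint_S_tree_family (lex_prod G H) (Pair u ` S) k (\<lambda>i. map_graph (Pair u) (T i))"
proof -
  have "inj (Pair u)" by (simp add: inj_on_def)
  then show ?thesis
    using assms(3) S_tree_lex_prod_layer_copy[OF assms(1,2)] edges_map_graph_disjoint
    unfolding disjoint_S_tree_family_def by metis
qed

lemma disjoint_S_tree_family_stars:
  assumes "graph G" "graph H" "S \<subseteq> verts H"
    and "inj_on centre {..<k}" "centre ` {..<k} \<subseteq> neighbours G u \<times> verts H"
  shows "disjoint_S_tree_family (lex_prod G H) (Pair u ` S) k (\<lambda>i. star (centre i) (Pair u ` S))"
  unfolding disjoint_S_tree_family_def
proof (intro conjI allI impI)
  fix i assume "i < k"
  then have "fst (centre i) \<in> neighbours G u" "snd (centre i) \<in> verts H" using assms(5) by auto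
  then show "S_tree (lex_prod G H) (Pair u ` S) (star (centre i) (Pair u ` S))"
    using S_tree_lex_prod_star[OF assms(1,2) _ _ assms(3)] by (metis prod.collapse)
next
  fix i j assume "i < k" "j < k" "i \<noteq> j"
  then have "centre i \<noteq> centre j" using assms(4) by (auto dest: inj_onD)
  moreover have "centre l \<notin> Pair u ` S" if "l < k" for l
    using that assms(5) neighboursD(1)[OF assms(1)] by fastforce
  ultimately show "edges (star (centre i) (Pair u ` S)) \<inter> edges (star (centre j) (Pair u ` S)) = {}"
    using \<open>i < k\<close> \<open>j < k\<close> by (intro edges_star_disjoint)
qed

lemma has_disjoint_S_trees_lex_prod_layer:
  assumes "graph G" "graph H" "u \<in> verts G" "S \<subseteq> verts H"
    and "has_k_disjoint_S_trees H S k" "m \<le> card (neighbours G u)"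
  shows "has_k_disjoint_S_trees (lex_prod G H) (Pair u ` S) (k + m * card (verts H))"
proof -
  let ?n = "m * card (verts H)"
  obtain T where T: "disjoint_S_tree_family H S k T"
    using assms(5) has_k_disjoint_S_trees_iff_family by blast
  obtain W where W: "W \<subseteq> neighbours G u" "card W = m"
    using assms(6) by (meson obtain_subset_with_card_n)
  have "finite W" using W(1) finite_neighbours[OF assms(1)] by (rule finite_subset)
  then have "finite (W \<times> verts H)" using assms(2) by (simp add: graph_def)
  then obtain centre where "bij_betw centre {0..<card (W \<times> verts H)} (W \<times> verts H)"
    by (rule ex_bij_betw_nat_finite[THEN exE])
  then have centre: "bij_betw centre {..<?n} (W \<times> verts H)"
    by (simp add: card_cartesian_product W(2) atLeast0LessThan)
  have "disjoint_S_tree_family (lex_prod G H) (Pair u ` S) (k + ?n)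
      (\<lambda>i. if i < k then map_graph (Pair u) (T i) else star (centre (i - k)) (Pair u ` S))"
  proof (rule disjoint_S_tree_family_append)
    show "disjoint_S_tree_family (lex_prod G H) (Pair u ` S) k (\<lambda>i. map_graph (Pair u) (T i))"
      by (rule disjoint_S_tree_family_layer_copies[OF assms(2,3) T])
    show "disjoint_S_tree_family (lex_prod G H) (Pair u ` S) ?n (\<lambda>i. star (centre i) (Pair u ` S))"
      using centre W(1) by (intro disjoint_S_tree_family_stars[OF assms(1,2,4)]) (auto simp: bij_betw_def)
  next
    fix i j assume "j < ?n"
    then have "centre j \<in> W \<times> verts H" using bij_betw_apply[OF centre] by simp
    then have "fst (centre j) \<in> neighbours G u" using W(1) by auto
    then have "fst (centre j) \<noteq> u" by (rule neighboursD(1)[OF assms(1)])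
    then show "edges (map_graph (Pair u) (T i)) \<inter> edges (star (centre j) (Pair u ` S)) = {}"
      using edges_layer_copy_star_disjoint[of "fst (centre j)" u "T i" "snd (centre j)"] by simp
  qed
  then show ?thesis using has_k_disjoint_S_trees_iff_family by blast
qed

theorem lemma3p1:
  fixes G :: "'a sgraph" and H :: "'b sgraph" and x y z :: "'a \<times> 'b" and u :: 'a
  assumes "graph G" and "graph H" and "connected G" and "connected H"
    and "card (verts G) \<ge> 3" and "card (verts H) \<ge> 3"
    and "u \<in> verts G"
    and "x \<in> H_layer G H u" and "y \<in> H_layer G H u" and "z \<in> H_layer G H u"
    and "x \<noteq> y" and "x \<noteq> z" and "y \<noteq> z"
  shows "has_k_disjoint_S_trees (lex_prod G H) {x, y, z}
           (lambda3 H + lambda3 G * card (verts H))"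
proof -
  obtain a b c where "x = (u, a)" "y = (u, b)" "z = (u, c)" and S: "{a, b, c} \<subseteq> verts H"
    using assms(8-10) unfolding H_layer_def by blast
  then have xyz: "{x, y, z} = Pair u ` {a, b, c}" and "card {a, b, c} = 3"
    using assms(11-13) by auto
  then have "has_k_disjoint_S_trees H {a, b, c} (lambda3 H)"
    using has_lambda3_disjoint_S_trees[OF assms(2) S] by blast
  moreover have "lambda3 G \<le> card (neighbours G u)"
    using lambda3_le_degree[OF assms(1,5,7)] .
  ultimately show ?thesis
    unfolding xyz using has_disjoint_S_trees_lex_prod_layer[OF assms(1,2,7) S] by blast
qed

end
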